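(* Let $\{\alpha_n\}$ and $\{\beta_n\}$ be sequences in $[0,1]$, $\{\tau_n\}$ a nonnegative sequence, and $r\in\mathbb Z^+$ such that $\sum_{n=1}^\infty\tau_n|\alpha_n-\beta_n|^r<\infty$. If $\sum_{n=1}^\infty\tau_n\beta_n<\infty$, then $\sum_{n=1}^\infty\tau_n\alpha_n^r<\infty$. *)

theory Defs
  imports "HOL-Analysis.Analysis"
begin

end

theory Submission
  imports Defs
begin

text \<open>Since \<open>\<beta>\<^sub>n \<le> 1\<close>, the term \<open>\<beta>\<^sub>n\<close> dominates \<open>\<beta>\<^sub>n\<^sup>r\<close>, so
  \<open>\<alpha>\<^sub>n\<^sup>r \<le> (\<bar>\<alpha>\<^sub>n - \<beta>\<^sub>n\<bar> + \<beta>\<^sub>n)\<^sup>r \<le> 2\<^sup>r (\<bar>\<alpha>\<^sub>n - \<beta>\<^sub>n\<bar>\<^sup>r + \<beta>\<^sub>n)\<close>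
  and the claim follows by comparison with a combination of the two convergent series.\<close>

lemma power_add_le_two_power_mult:
  fixes x y :: "'a::linordered_idom"
  assumes "0 \<le> x" "0 \<le> y"
  shows "(x + y) ^ n \<le> 2 ^ n * (x ^ n + y ^ n)"
proof -
  have "(x + y) ^ n \<le> (2 * max x y) ^ n"
    by (rule power_mono) (use assms in \<open>auto simp: max_def\<close>)
  also have "\<dots> = 2 ^ n * max x y ^ n"
    by (simp add: power_mult_distrib)
  also have "max x y ^ n \<le> x ^ n + y ^ n"
    using assms by (cases "x \<le> y") (auto simp: max_def)
  finally show ?thesis
    by simp
qed

lemma power_le_two_power_mult_dist_plus:
  fixes a b :: "'a::linordered_idom"
  assumes "0 \<le> a" "0 \<le> b" "b \<le> 1" "r \<ge> 1"
  shows "a ^ r \<le> 2 ^ r * (\<bar>a - b\<bar> ^ r + b)"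
proof -
  have "a ^ r \<le> (\<bar>a - b\<bar> + b) ^ r"
    by (rule power_mono) (use assms in auto)
  also have "\<dots> \<le> 2 ^ r * (\<bar>a - b\<bar> ^ r + b ^ r)"
    using assms by (intro power_add_le_two_power_mult) auto
  also have "b ^ r \<le> b"
    using assms power_decreasing[of 1 r b] by simp
  finally show ?thesis
    by simp
qed

lemma summable_mult_power_of_summable_mult_dist:
  fixes a b \<tau> :: "nat \<Rightarrow> real"
  assumes "\<And>n. 0 \<le> a n" and "\<And>n. b n \<in> {0..1}" and "\<And>n. 0 \<le> \<tau> n" and "r \<ge> 1"
    and "summable (\<lambda>n. \<tau> n * \<bar>a n - b n\<bar> ^ r)"
    and "summable (\<lambda>n. \<tau> n * b n)"
  shows "summable (\<lambda>n. \<tau> n * a n ^ r)"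
proof (rule summable_comparison_test')
  show "summable (\<lambda>n. 2 ^ r * (\<tau> n * \<bar>a n - b n\<bar> ^ r + \<tau> n * b n))"
    using assms(5,6) by (intro summable_mult summable_add)
next
  fix n
  have "\<tau> n * a n ^ r \<le> \<tau> n * (2 ^ r * (\<bar>a n - b n\<bar> ^ r + b n))"
    using assms by (intro mult_left_mono power_le_two_power_mult_dist_plus) auto
  then show "norm (\<tau> n * a n ^ r) \<le> 2 ^ r * (\<tau> n * \<bar>a n - b n\<bar> ^ r + \<tau> n * b n)"
    using assms(1,3)[of n] by (simp add: algebra_simps)
qed

theorem lemma4:
  fixes \<alpha> \<beta> \<tau> :: "nat \<Rightarrow> real" and r :: nat
  assumes "\<And>n. n \<ge> 1 \<Longrightarrow> \<alpha> n \<in> {0..1}"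
    and "\<And>n. n \<ge> 1 \<Longrightarrow> \<beta> n \<in> {0..1}"
    and "\<And>n. n \<ge> 1 \<Longrightarrow> \<tau> n \<ge> 0"
    and "r \<ge> 1"
    and "summable (\<lambda>n. \<tau> (Suc n) * \<bar>\<alpha> (Suc n) - \<beta> (Suc n)\<bar> ^ r)"
    and "summable (\<lambda>n. \<tau> (Suc n) * \<beta> (Suc n))"
  shows "summable (\<lambda>n. \<tau> (Suc n) * \<alpha> (Suc n) ^ r)"
  by (rule summable_mult_power_of_summable_mult_dist[OF _ _ _ assms(4-6)])
    (use assms(1-3) in auto)

end
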